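(* Let $A$ be an $m\times n$ matrix with nonnegative entries in $[0,1]$ and no zero column, and let $H$ be the smallest nonzero entry of $A$. Then, for DIMSUM with parameter $\gamma$, the expected number of values emitted to any single key $(i,j)$ is at most $\gamma/H^2$ (independent of $m$).
   Context: Let $A=(a_{ki})$ be an $m\times n$ real matrix with rows $r_1,\dots,r_m$ and columns $c_1,\dots,c_n$; $\|c_i\|$ is the Euclidean norm of column $i$ (assumed nonzero). DIMSUM with parameter $\gamma>0$ is the following randomized procedure. For each pair of distinct column indices $(i,j)$ set $p_{ij}=\min\!\left(1,\frac{\gamma}{\|c_i\|\|c_j\|}\right)$. For each row $k$ and each pair $(i,j)$ with $a_{ki}a_{kj}\neq 0$, independently (over all $k$ and all pairs) with probability $p_{ij}$ the value $a_{ki}a_{kj}$ is emitted to key $(i,j)$ (one "emission"). *)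

theory Defs
  imports "HOL-Probability.Probability"
begin

text \<open>An m x n real matrix is represented as a function a :: nat => nat => real,
  where a k i is the entry in row k < m, column i < n.\<close>

definition col_norm :: "(nat \<Rightarrow> nat \<Rightarrow> real) \<Rightarrow> nat \<Rightarrow> nat \<Rightarrow> real" where
  "col_norm a m i = sqrt (\<Sum>k<m. (a k i)\<^sup>2)"

definition dimsum_prob :: "real \<Rightarrow> (nat \<Rightarrow> nat \<Rightarrow> real) \<Rightarrow> nat \<Rightarrow> nat \<Rightarrow> nat \<Rightarrow> real" where
  "dimsum_prob \<gamma> a m i j = min 1 (\<gamma> / (col_norm a m i * col_norm a m j))"

definition dimsum_events :: "(nat \<Rightarrow> nat \<Rightarrow> real) \<Rightarrow> nat \<Rightarrow> nat \<Rightarrow> (nat \<times> nat \<times> nat) set" where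
  "dimsum_events a m n = {(k, i, j). k < m \<and> i < n \<and> j < n \<and> i \<noteq> j \<and> a k i * a k j \<noteq> 0}"

definition dimsum_pmf :: "real \<Rightarrow> (nat \<Rightarrow> nat \<Rightarrow> real) \<Rightarrow> nat \<Rightarrow> nat \<Rightarrow> (nat \<times> nat \<times> nat \<Rightarrow> bool) pmf" where
  "dimsum_pmf \<gamma> a m n = Pi_pmf (dimsum_events a m n) False
     (\<lambda>(k, i, j). bernoulli_pmf (dimsum_prob \<gamma> a m i j))"

definition emissions_to :: "nat \<Rightarrow> (nat \<times> nat \<times> nat \<Rightarrow> bool) \<Rightarrow> nat \<Rightarrow> nat \<Rightarrow> nat" where
  "emissions_to m \<omega> i j = card {k. k < m \<and> \<omega> (k, i, j)}"

definition smallest_nonzero_entry :: "(nat \<Rightarrow> nat \<Rightarrow> real) \<Rightarrow> nat \<Rightarrow> nat \<Rightarrow> real" where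
  "smallest_nonzero_entry a m n = Min {a k i | k i. k < m \<and> i < n \<and> a k i \<noteq> 0}"

end

theory Submission
  imports Defs
begin

text \<open>The count at key (i,j) is a sum of independent Bernoulli(p_ij) indicators, one for each
  of the N rows where both entries are nonzero, so its expectation is N p_ij. Each of these
  rows contributes at least H^2 to the squared norms of columns i and j, hence
  |c_i| |c_j| >= N H^2 and N p_ij <= N gamma / (|c_i| |c_j|) <= gamma / H^2.\<close>

lemma finite_dimsum_events: "finite (dimsum_events a m n)"
  by (rule finite_subset[of _ "{..<m} \<times> {..<n} \<times> {..<n}"]) (auto simp: dimsum_events_def)

lemma dimsum_prob_nonneg: "0 \<le> \<gamma> \<Longrightarrow> 0 \<le> dimsum_prob \<gamma> a m i j"
  by (simp add: dimsum_prob_def col_norm_def sum_nonneg)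

lemma dimsum_prob_le_1: "dimsum_prob \<gamma> a m i j \<le> 1"
  by (simp add: dimsum_prob_def)

lemma dimsum_pmf_component:
  "map_pmf (\<lambda>\<omega>. \<omega> (k, i, j)) (dimsum_pmf \<gamma> a m n) =
     (if (k, i, j) \<in> dimsum_events a m n then bernoulli_pmf (dimsum_prob \<gamma> a m i j)
      else return_pmf False)"
  unfolding dimsum_pmf_def by (subst Pi_pmf_component) (auto simp: finite_dimsum_events)

lemma expectation_emission_indicator:
  assumes "0 \<le> \<gamma>" "i < n" "j < n" "i \<noteq> j"
  shows "measure_pmf.expectation (dimsum_pmf \<gamma> a m n) (\<lambda>\<omega>. of_bool (\<omega> (k, i, j)))
           = of_bool (k < m \<and> a k i * a k j \<noteq> 0) * dimsum_prob \<gamma> a m i j"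
proof -
  have "measure_pmf.expectation (dimsum_pmf \<gamma> a m n) (\<lambda>\<omega>. of_bool (\<omega> (k, i, j)) :: real)
      = measure_pmf.expectation (map_pmf (\<lambda>\<omega>. \<omega> (k, i, j)) (dimsum_pmf \<gamma> a m n)) of_bool"
    by simp
  also have "\<dots> = of_bool ((k, i, j) \<in> dimsum_events a m n) * dimsum_prob \<gamma> a m i j"
    unfolding dimsum_pmf_component
    using dimsum_prob_nonneg[OF assms(1)] dimsum_prob_le_1 by simp
  finally show ?thesis
    using assms by (simp add: dimsum_events_def)
qed

lemma expectation_emissions_to:
  assumes "0 \<le> \<gamma>" "i < n" "j < n" "i \<noteq> j"
  shows "measure_pmf.expectation (dimsum_pmf \<gamma> a m n) (\<lambda>\<omega>. real (emissions_to m \<omega> i j))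
           = card {k. k < m \<and> a k i * a k j \<noteq> 0} * dimsum_prob \<gamma> a m i j"
proof -
  have count: "real (emissions_to m \<omega> i j) = (\<Sum>k<m. of_bool (\<omega> (k, i, j)))" for \<omega>
    by (simp add: emissions_to_def Int_def)
  have "measure_pmf.expectation (dimsum_pmf \<gamma> a m n) (\<lambda>\<omega>. real (emissions_to m \<omega> i j))
      = (\<Sum>k<m. measure_pmf.expectation (dimsum_pmf \<gamma> a m n) (\<lambda>\<omega>. of_bool (\<omega> (k, i, j))))"
    unfolding count
    by (rule Bochner_Integration.integral_sum)
       (auto intro!: measure_pmf.integrable_const_bound[where B = 1])
  also have "\<dots> = (\<Sum>k<m. of_bool (a k i * a k j \<noteq> 0)) * dimsum_prob \<gamma> a m i j"
    by (simp add: expectation_emission_indicator[OF assms] sum_distrib_right)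
  finally show ?thesis
    by (simp add: Int_def)
qed

lemma card_mult_sq_le_col_norm_sq:
  fixes h :: real
  assumes "S \<subseteq> {..<m}" "0 \<le> h" "\<And>k. k \<in> S \<Longrightarrow> h \<le> \<bar>a k l\<bar>"
  shows "card S * h\<^sup>2 \<le> (col_norm a m l)\<^sup>2"
proof -
  have "card S * h\<^sup>2 = (\<Sum>k\<in>S. h\<^sup>2)"
    by simp
  also have "\<dots> \<le> (\<Sum>k\<in>S. (a k l)\<^sup>2)"
    using assms(2,3) by (intro sum_mono) (metis abs_le_square_iff abs_of_nonneg)
  also have "\<dots> \<le> (\<Sum>k<m. (a k l)\<^sup>2)"
    using assms(1) by (intro sum_mono2) auto
  also have "\<dots> = (col_norm a m l)\<^sup>2"
    by (simp add: col_norm_def sum_nonneg)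
  finally show ?thesis .
qed

lemma finite_nonzero_entries:
  fixes a :: "nat \<Rightarrow> nat \<Rightarrow> real"
  shows "finite {a k l | k l. k < m \<and> l < n \<and> a k l \<noteq> 0}"
proof -
  have "{a k l | k l. k < m \<and> l < n \<and> a k l \<noteq> 0} \<subseteq> (\<lambda>(k, l). a k l) ` ({..<m} \<times> {..<n})"
    by auto
  then show ?thesis
    by (rule finite_subset) auto
qed

lemma smallest_nonzero_entry_le:
  assumes "k < m" "l < n" "a k l \<noteq> 0"
  shows "smallest_nonzero_entry a m n \<le> a k l"
  unfolding smallest_nonzero_entry_def
  using assms finite_nonzero_entries by (intro Min_le) auto

lemma smallest_nonzero_entry_pos:
  assumes "\<And>k l. k < m \<Longrightarrow> l < n \<Longrightarrow> 0 \<le> a k l"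
    and "k\<^sub>0 < m" "l\<^sub>0 < n" "a k\<^sub>0 l\<^sub>0 \<noteq> 0"
  shows "0 < smallest_nonzero_entry a m n"
proof -
  have "smallest_nonzero_entry a m n \<in> {a k l | k l. k < m \<and> l < n \<and> a k l \<noteq> 0}"
    unfolding smallest_nonzero_entry_def
    using finite_nonzero_entries assms(2-4) by (intro Min_in) blast+
  then show ?thesis
    using assms(1) by force
qed

lemma mult_min_1_le_div_sq:
  fixes N \<gamma> h x y :: real
  assumes "0 \<le> \<gamma>" "0 < h" "0 \<le> N" "N * h\<^sup>2 \<le> x\<^sup>2" "N * h\<^sup>2 \<le> y\<^sup>2" "0 \<le> x" "0 \<le> y"
  shows "N * min 1 (\<gamma> / (x * y)) \<le> \<gamma> / h\<^sup>2"
proof (cases "N = 0")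
  case True
  then show ?thesis using assms by simp
next
  case False
  have Nh_pos: "0 < N * h\<^sup>2"
    using False assms(2,3) by simp
  have "(N * h\<^sup>2) * (N * h\<^sup>2) \<le> x\<^sup>2 * y\<^sup>2"
    by (rule mult_mono[OF assms(4,5)]) (use Nh_pos in simp_all)
  then have "(N * h\<^sup>2)\<^sup>2 \<le> (x * y)\<^sup>2"
    by (simp only: power2_eq_square mult_ac)
  then have xy: "N * h\<^sup>2 \<le> x * y"
    by (rule power2_le_imp_le) (use assms(6,7) in simp)
  have "N * min 1 (\<gamma> / (x * y)) \<le> N * (\<gamma> / (x * y))"
    using assms(3) by (intro mult_left_mono) simp_all
  also have "\<dots> \<le> N * (\<gamma> / (N * h\<^sup>2))"
    using xy Nh_pos assms(1,3) by (intro mult_left_mono divide_left_mono) simp_all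
  also have "\<dots> = \<gamma> / h\<^sup>2"
    using False by simp
  finally show ?thesis .
qed

text \<open>Only nonnegativity of the entries is needed (to make the smallest nonzero entry
  positive).\<close>

theorem theorem6:
  fixes a :: "nat \<Rightarrow> nat \<Rightarrow> real" and m n :: nat and \<gamma> :: real
  assumes gamma_pos: "\<gamma> > 0"
    and entries: "\<And>k i. k < m \<Longrightarrow> i < n \<Longrightarrow> 0 \<le> a k i \<and> a k i \<le> 1"
    and no_zero_col: "\<And>i. i < n \<Longrightarrow> \<exists>k<m. a k i \<noteq> 0"
    and key: "i < n" "j < n" "i \<noteq> j"
  shows "measure_pmf.expectation (dimsum_pmf \<gamma> a m n) (\<lambda>\<omega>. real (emissions_to m \<omega> i j))
           \<le> \<gamma> / (smallest_nonzero_entry a m n)\<^sup>2"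
proof -
  define S where "S = {k. k < m \<and> a k i * a k j \<noteq> 0}"
  define H where "H = smallest_nonzero_entry a m n"
  obtain k\<^sub>0 where "k\<^sub>0 < m" "a k\<^sub>0 i \<noteq> 0"
    using no_zero_col key by blast
  then have H_pos: "0 < H"
    unfolding H_def using entries key by (intro smallest_nonzero_entry_pos) auto
  have col_bound: "card S * H\<^sup>2 \<le> (col_norm a m l)\<^sup>2" if "l \<in> {i, j}" for l
  proof (rule card_mult_sq_le_col_norm_sq)
    fix k assume "k \<in> S"
    then show "H \<le> \<bar>a k l\<bar>"
      using that key smallest_nonzero_entry_le[of k m l n a]
      by (auto simp: S_def H_def)
  qed (use H_pos in \<open>auto simp: S_def\<close>)
  have "measure_pmf.expectation (dimsum_pmf \<gamma> a m n) (\<lambda>\<omega>. real (emissions_to m \<omega> i j))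
      = card S * min 1 (\<gamma> / (col_norm a m i * col_norm a m j))"
    using gamma_pos key by (simp add: expectation_emissions_to S_def dimsum_prob_def)
  also have "\<dots> \<le> \<gamma> / H\<^sup>2"
    using gamma_pos H_pos col_bound
    by (intro mult_min_1_le_div_sq) (auto simp: col_norm_def sum_nonneg)
  finally show ?thesis
    by (simp add: H_def)
qed

end
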